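(* Let $\Phi$ be the closure $cl(\varphi_0)$ of a formula and $M^*$ the canonical model for $\Phi$. If $[\circ^+]_i\varphi\in\Phi$ and $\Gamma\in W^*$, then $[\circ^+]_i\varphi\in\Gamma$ iff every $[\circ^+]_i$-path from $\Gamma$ is both a $\varphi$-path and a $[\circ^+]_i\varphi$-path.
   Context: $\mathcal{L}_{AIL}$: $\varphi::=p\mid\neg\varphi\mid\varphi\wedge\varphi\mid A_i\varphi\mid I_i\varphi\mid E_i\varphi\mid[\approx]_i\varphi\mid[\circ^+]_i\varphi$ (countable atoms, finite agent set). Hilbert system $\mathbf{AIL}$: axioms — propositional tautologies; $A_i\varphi\leftrightarrow A_i\neg\varphi$; $A_i(\varphi\wedge\psi)\leftrightarrow A_i\varphi\wedge A_i\psi$; $A_i\varphi\leftrightarrow A_iO_j\varphi$ for $O_j\in\{A_j,I_j,[\approx]_j,[\circ^+]_j,E_j\}$; $A_i\varphi\to I_iA_i\varphi$; $\neg A_i\varphi\to I_i\neg A_i\varphi$; $A_ip\wedge p\to[\approx]_ip$; for $\Box\in\{I_i,[\approx]_i\}$: $\Box(\varphi\to\psi)\to(\Box\varphi\to\Box\psi)$, $\Box\varphi\to\varphi$, $\neg\Box\varphi\to\Box\neg\Box\varphi$; $[\circ^+]_i(\varphi\to\psi)\to([\circ^+]_i\varphi\to[\circ^+]_i\psi)$; $[\circ^+]_i\varphi\to\varphi\wedge[\approx]_iI_i[\circ^+]_i\varphi$; $[\circ^+]_i(\varphi\to[\approx]_iI_i\varphi)\to(\varphi\to[\circ^+]_i\varphi)$;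 $E_i\varphi\leftrightarrow A_i\varphi\wedge[\circ^+]_i\varphi$; rules: modus ponens, necessitation for $I_i,[\approx]_i,[\circ^+]_i$. $\Gamma\vdash\varphi$ iff $\vdash\bigwedge\Gamma'\to\varphi$ for some finite $\Gamma'\subseteq\Gamma$. $cl(\varphi_0)$ is the smallest set containing $\varphi_0$ closed under: subformulas; $\neg\psi$ for non-negations $\psi$; $A_i\psi\Rightarrow A_i\chi$ for subformulas $\chi$ of $\psi$; $A_i\psi\Rightarrow I_iA_i\psi,I_i\neg A_i\psi,[\approx]_ip$ for atoms $p$ in $\psi$; $I_i\psi\Rightarrow I_iI_i\psi,I_i\neg I_i\psi$ unless $\psi$ is $I_i\chi$ or $\neg I_i\chi$; analogously for $[\approx]_i$; $[\circ^+]_i\psi\Rightarrow[\approx]_iI_i[\circ^+]_i\psi$; $E_i\psi\Rightarrow A_i\psi,[\circ^+]_i\psi$. $W^*$ is the set of maximal consistent sets in $\Phi$ (subsets $\Gamma\subseteq\Phi$ with $\Gamma\nvdash\bot$ not properly extendable within $\Phi$). $(\Gamma,\Delta)\in\sim_i^*$ iff $\{\psi:I_i\psi\in\Gamma\}\subseteq\Delta$; $(\Gamma,\Delta)\in\approx_i^*$ iff $\{\psi:[\approx]_i\psi\in\Gamma\}\subseteq\Delta$; $\sim_i^*\circ\approx_i^*=\{(\Gamma,\Delta):\exists\Theta\,((\Gamma,\Theta)\in\approx_i^*,(\Theta,\Delta)\in\sim_i^* )\}$. A $[\circ^+]_i$-path from $\Gamma$ is a finite sequence $\Gamma_0,\dots,\Gamma_n$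 of elements of $W^*$ with $\Gamma_0=\Gamma$ and $(\Gamma_k,\Gamma_{k+1})\in\sim_i^*\circ\approx_i^*$ for all $0\le k<n$. For a formula $\psi$, a $\psi$-path is a sequence $\Gamma_0,\dots,\Gamma_n$ of elements of $W^*$ with $\psi\in\Gamma_k$ for all $0\le k\le n$. *)

theory Defs
  imports Main
begin

text \<open>Atoms are natural numbers (countably many); agents range over a finite type 'i.
  Constructors: Aw i = A_i (awareness), Ii i = I_i, Ei i = E_i,
  Apx i = [approx]_i, Circ i = [circ+]_i.\<close>

datatype 'i fm =
    Atom nat
  | Neg "'i fm"
  | Conj "'i fm" "'i fm"
  | Aw 'i "'i fm"
  | Ii 'i "'i fm"
  | Ei 'i "'i fm"
  | Apx 'i "'i fm"
  | Circ 'i "'i fm"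

definition Imp :: "'i fm \<Rightarrow> 'i fm \<Rightarrow> 'i fm" where
  "Imp \<phi> \<psi> = Neg (Conj \<phi> (Neg \<psi>))"

definition Iff :: "'i fm \<Rightarrow> 'i fm \<Rightarrow> 'i fm" where
  "Iff \<phi> \<psi> = Conj (Imp \<phi> \<psi>) (Imp \<psi> \<phi>)"

definition Bot :: "'i fm" where
  "Bot = Conj (Atom 0) (Neg (Atom 0))"

definition Top :: "'i fm" where
  "Top = Neg Bot"

fun conj_list :: "'i fm list \<Rightarrow> 'i fm" where
  "conj_list [] = Top"
| "conj_list (x # xs) = Conj x (conj_list xs)"

text \<open>Propositional evaluation: atoms and modal formulas are propositional variables.\<close>

fun peval :: "('i fm \<Rightarrow> bool) \<Rightarrow> 'i fm \<Rightarrow> bool" where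
  "peval v (Neg \<phi>) = (\<not> peval v \<phi>)"
| "peval v (Conj \<phi> \<psi>) = (peval v \<phi> \<and> peval v \<psi>)"
| "peval v \<phi> = v \<phi>"

definition taut :: "'i fm \<Rightarrow> bool" where
  "taut \<phi> = (\<forall>v. peval v \<phi>)"

definition ops :: "'i \<Rightarrow> ('i fm \<Rightarrow> 'i fm) set" where
  "ops j = {Aw j, Ii j, Apx j, Circ j, Ei j}"

inductive deriv :: "'i fm \<Rightarrow> bool" where
  Taut: "taut \<phi> \<Longrightarrow> deriv \<phi>"
| AwNeg: "deriv (Iff (Aw i \<phi>) (Aw i (Neg \<phi>)))"
| AwConj: "deriv (Iff (Aw i (Conj \<phi> \<psi>)) (Conj (Aw i \<phi>) (Aw i \<psi>)))"
| AwOp: "Op \<in> ops j \<Longrightarrow> deriv (Iff (Aw i \<phi>) (Aw i (Op \<phi>)))"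
| AwIntro: "deriv (Imp (Aw i \<phi>) (Ii i (Aw i \<phi>)))"
| NAwIntro: "deriv (Imp (Neg (Aw i \<phi>)) (Ii i (Neg (Aw i \<phi>))))"
| AwAtom: "deriv (Imp (Conj (Aw i (Atom p)) (Atom p)) (Apx i (Atom p)))"
| K_I: "deriv (Imp (Ii i (Imp \<phi> \<psi>)) (Imp (Ii i \<phi>) (Ii i \<psi>)))"
| T_I: "deriv (Imp (Ii i \<phi>) \<phi>)"
| Five_I: "deriv (Imp (Neg (Ii i \<phi>)) (Ii i (Neg (Ii i \<phi>))))"
| K_Apx: "deriv (Imp (Apx i (Imp \<phi> \<psi>)) (Imp (Apx i \<phi>) (Apx i \<psi>)))"
| T_Apx: "deriv (Imp (Apx i \<phi>) \<phi>)"
| Five_Apx: "deriv (Imp (Neg (Apx i \<phi>)) (Apx i (Neg (Apx i \<phi>))))"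
| K_Circ: "deriv (Imp (Circ i (Imp \<phi> \<psi>)) (Imp (Circ i \<phi>) (Circ i \<psi>)))"
| Mix_Circ: "deriv (Imp (Circ i \<phi>) (Conj \<phi> (Apx i (Ii i (Circ i \<phi>)))))"
| Ind_Circ: "deriv (Imp (Circ i (Imp \<phi> (Apx i (Ii i \<phi>)))) (Imp \<phi> (Circ i \<phi>)))"
| E_def: "deriv (Iff (Ei i \<phi>) (Conj (Aw i \<phi>) (Circ i \<phi>)))"
| MP: "deriv (Imp \<phi> \<psi>) \<Longrightarrow> deriv \<phi> \<Longrightarrow> deriv \<psi>"
| Nec_I: "deriv \<phi> \<Longrightarrow> deriv (Ii i \<phi>)"
| Nec_Apx: "deriv \<phi> \<Longrightarrow> deriv (Apx i \<phi>)"
| Nec_Circ: "deriv \<phi> \<Longrightarrow> deriv (Circ i \<phi>)"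

definition derives :: "'i fm set \<Rightarrow> 'i fm \<Rightarrow> bool" where
  "derives \<Gamma> \<phi> = (\<exists>xs. set xs \<subseteq> \<Gamma> \<and> deriv (Imp (conj_list xs) \<phi>))"

fun subfms :: "'i fm \<Rightarrow> 'i fm set" where
  "subfms (Atom p) = {Atom p}"
| "subfms (Neg \<phi>) = insert (Neg \<phi>) (subfms \<phi>)"
| "subfms (Conj \<phi> \<psi>) = insert (Conj \<phi> \<psi>) (subfms \<phi> \<union> subfms \<psi>)"
| "subfms (Aw i \<phi>) = insert (Aw i \<phi>) (subfms \<phi>)"
| "subfms (Ii i \<phi>) = insert (Ii i \<phi>) (subfms \<phi>)"
| "subfms (Ei i \<phi>) = insert (Ei i \<phi>) (subfms \<phi>)"
| "subfms (Apx i \<phi>) = insert (Apx i \<phi>) (subfms \<phi>)"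
| "subfms (Circ i \<phi>) = insert (Circ i \<phi>) (subfms \<phi>)"

fun atoms :: "'i fm \<Rightarrow> nat set" where
  "atoms (Atom p) = {p}"
| "atoms (Neg \<phi>) = atoms \<phi>"
| "atoms (Conj \<phi> \<psi>) = atoms \<phi> \<union> atoms \<psi>"
| "atoms (Aw i \<phi>) = atoms \<phi>"
| "atoms (Ii i \<phi>) = atoms \<phi>"
| "atoms (Ei i \<phi>) = atoms \<phi>"
| "atoms (Apx i \<phi>) = atoms \<phi>"
| "atoms (Circ i \<phi>) = atoms \<phi>"

fun is_neg :: "'i fm \<Rightarrow> bool" where
  "is_neg (Neg _) = True"
| "is_neg _ = False"

inductive_set cl :: "'i fm \<Rightarrow> 'i fm set" for \<phi>0 :: "'i fm" where
  base: "\<phi>0 \<in> cl \<phi>0"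
| sub: "\<psi> \<in> cl \<phi>0 \<Longrightarrow> \<chi> \<in> subfms \<psi> \<Longrightarrow> \<chi> \<in> cl \<phi>0"
| neg: "\<psi> \<in> cl \<phi>0 \<Longrightarrow> \<not> is_neg \<psi> \<Longrightarrow> Neg \<psi> \<in> cl \<phi>0"
| aw_sub: "Aw i \<psi> \<in> cl \<phi>0 \<Longrightarrow> \<chi> \<in> subfms \<psi> \<Longrightarrow> Aw i \<chi> \<in> cl \<phi>0"
| aw_I: "Aw i \<psi> \<in> cl \<phi>0 \<Longrightarrow> Ii i (Aw i \<psi>) \<in> cl \<phi>0"
| aw_IN: "Aw i \<psi> \<in> cl \<phi>0 \<Longrightarrow> Ii i (Neg (Aw i \<psi>)) \<in> cl \<phi>0"
| aw_atom: "Aw i \<psi> \<in> cl \<phi>0 \<Longrightarrow> p \<in> atoms \<psi> \<Longrightarrow> Apx i (Atom p) \<in> cl \<phi>0"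
| I_I: "Ii i \<psi> \<in> cl \<phi>0 \<Longrightarrow> (\<nexists>\<chi>. \<psi> = Ii i \<chi> \<or> \<psi> = Neg (Ii i \<chi>))
          \<Longrightarrow> Ii i (Ii i \<psi>) \<in> cl \<phi>0"
| I_IN: "Ii i \<psi> \<in> cl \<phi>0 \<Longrightarrow> (\<nexists>\<chi>. \<psi> = Ii i \<chi> \<or> \<psi> = Neg (Ii i \<chi>))
          \<Longrightarrow> Ii i (Neg (Ii i \<psi>)) \<in> cl \<phi>0"
| Apx_Apx: "Apx i \<psi> \<in> cl \<phi>0 \<Longrightarrow> (\<nexists>\<chi>. \<psi> = Apx i \<chi> \<or> \<psi> = Neg (Apx i \<chi>))
          \<Longrightarrow> Apx i (Apx i \<psi>) \<in> cl \<phi>0"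
| Apx_ApxN: "Apx i \<psi> \<in> cl \<phi>0 \<Longrightarrow> (\<nexists>\<chi>. \<psi> = Apx i \<chi> \<or> \<psi> = Neg (Apx i \<chi>))
          \<Longrightarrow> Apx i (Neg (Apx i \<psi>)) \<in> cl \<phi>0"
| circ: "Circ i \<psi> \<in> cl \<phi>0 \<Longrightarrow> Apx i (Ii i (Circ i \<psi>)) \<in> cl \<phi>0"
| E_A: "Ei i \<psi> \<in> cl \<phi>0 \<Longrightarrow> Aw i \<psi> \<in> cl \<phi>0"
| E_C: "Ei i \<psi> \<in> cl \<phi>0 \<Longrightarrow> Circ i \<psi> \<in> cl \<phi>0"

definition Wstar :: "'i fm set \<Rightarrow> 'i fm set set" where
  "Wstar \<Phi> = {\<Gamma>. \<Gamma> \<subseteq> \<Phi> \<and> \<not> derives \<Gamma> Bot \<and>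
                 (\<forall>\<Delta>. \<Gamma> \<subset> \<Delta> \<and> \<Delta> \<subseteq> \<Phi> \<longrightarrow> derives \<Delta> Bot)}"

definition sim_rel :: "'i fm set \<Rightarrow> 'i \<Rightarrow> ('i fm set \<times> 'i fm set) set" where
  "sim_rel \<Phi> i = {(\<Gamma>, \<Delta>). \<Gamma> \<in> Wstar \<Phi> \<and> \<Delta> \<in> Wstar \<Phi> \<and> {\<psi>. Ii i \<psi> \<in> \<Gamma>} \<subseteq> \<Delta>}"

definition apx_rel :: "'i fm set \<Rightarrow> 'i \<Rightarrow> ('i fm set \<times> 'i fm set) set" where
  "apx_rel \<Phi> i = {(\<Gamma>, \<Delta>). \<Gamma> \<in> Wstar \<Phi> \<and> \<Delta> \<in> Wstar \<Phi> \<and> {\<psi>. Apx i \<psi> \<in> \<Gamma>} \<subseteq> \<Delta>}"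

text \<open>sim_i o approx_i: first an approx_i step, then a sim_i step.\<close>
definition comp_rel :: "'i fm set \<Rightarrow> 'i \<Rightarrow> ('i fm set \<times> 'i fm set) set" where
  "comp_rel \<Phi> i = {(\<Gamma>, \<Delta>). \<exists>\<Theta>. (\<Gamma>, \<Theta>) \<in> apx_rel \<Phi> i \<and> (\<Theta>, \<Delta>) \<in> sim_rel \<Phi> i}"

definition circ_path :: "'i fm set \<Rightarrow> 'i \<Rightarrow> 'i fm set \<Rightarrow> 'i fm set list \<Rightarrow> bool" where
  "circ_path \<Phi> i \<Gamma> xs =
     (xs \<noteq> [] \<and> hd xs = \<Gamma> \<and> set xs \<subseteq> Wstar \<Phi> \<and>
      (\<forall>k. Suc k < length xs \<longrightarrow> (xs ! k, xs ! Suc k) \<in> comp_rel \<Phi> i))"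

definition fm_path :: "'i fm set \<Rightarrow> 'i fm \<Rightarrow> 'i fm set list \<Rightarrow> bool" where
  "fm_path \<Phi> \<psi> xs = (set xs \<subseteq> Wstar \<Phi> \<and> (\<forall>\<Delta> \<in> set xs. \<psi> \<in> \<Delta>))"

end

theory Submission
  imports Defs
begin

text \<open>The axiom
  [o+]_i \<phi> \<longrightarrow> \<phi> \<and> [\<approx>]_i I_i [o+]_i \<phi>, together with the closure condition putting
  [\<approx>]_i I_i [o+]_i \<phi> into \<Phi>, makes [o+]_i \<phi> pass along every \<approx>_i-step followed by a
  \<sim>_i-step, hence along every [o+]_i-path, and \<phi> comes with it. Conversely, the
  one-element path [\<Gamma>] is a [o+]_i \<phi>-path only if [o+]_i \<phi> \<in> \<Gamma>.\<close>

lemma peval_Imp [simp]: "peval v (Imp \<phi> \<psi>) = (peval v \<phi> \<longrightarrow> peval v \<psi>)"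
  by (simp add: Imp_def)

lemma peval_Bot [simp]: "peval v Bot = False"
  by (simp add: Bot_def)

lemma peval_conj_list [simp]: "peval v (conj_list xs) = (\<forall>x\<in>set xs. peval v x)"
  by (induction xs) (auto simp: Top_def)

lemma deriv_taut_mp: "taut (Imp \<phi> \<psi>) \<Longrightarrow> deriv \<phi> \<Longrightarrow> deriv \<psi>"
  using deriv.Taut deriv.MP by blast

lemma derives_if_mem_deriv_Imp:
  assumes "\<psi> \<in> \<Gamma>" and "deriv (Imp \<psi> \<chi>)"
  shows "derives \<Gamma> \<chi>"
proof -
  have "taut (Imp (Imp \<psi> \<chi>) (Imp (conj_list [\<psi>]) \<chi>))"
    unfolding taut_def by simp
  with assms(2) have "deriv (Imp (conj_list [\<psi>]) \<chi>)"
    by (rule deriv_taut_mp[rotated])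
  with assms(1) show ?thesis
    unfolding derives_def by (intro exI[of _ "[\<psi>]"]) auto
qed

lemma derives_Bot_cut:
  assumes "derives \<Gamma> \<psi>" and "derives (insert \<psi> \<Gamma>) Bot"
  shows "derives \<Gamma> Bot"
proof -
  obtain ys where ys: "set ys \<subseteq> \<Gamma>" "deriv (Imp (conj_list ys) \<psi>)"
    using assms(1) unfolding derives_def by blast
  obtain xs where xs: "set xs \<subseteq> insert \<psi> \<Gamma>" "deriv (Imp (conj_list xs) Bot)"
    using assms(2) unfolding derives_def by blast
  define zs where "zs = filter (\<lambda>x. x \<noteq> \<psi>) xs @ ys"
  have "taut (Imp (Imp (conj_list xs) Bot)
                  (Imp (Imp (conj_list ys) \<psi>) (Imp (conj_list zs) Bot)))"
    unfolding taut_def zs_def by auto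
  with xs(2) have "deriv (Imp (Imp (conj_list ys) \<psi>) (Imp (conj_list zs) Bot))"
    by (rule deriv_taut_mp[rotated])
  with ys(2) have "deriv (Imp (conj_list zs) Bot)"
    using deriv.MP by blast
  moreover have "set zs \<subseteq> \<Gamma>"
    using xs(1) ys(1) unfolding zs_def by auto
  ultimately show ?thesis
    unfolding derives_def by blast
qed

lemma Wstar_derives_mem:
  assumes "\<Gamma> \<in> Wstar \<Phi>" and "\<psi> \<in> \<Phi>" and "derives \<Gamma> \<psi>"
  shows "\<psi> \<in> \<Gamma>"
proof (rule ccontr)
  assume "\<psi> \<notin> \<Gamma>"
  with assms(1,2) have "derives (insert \<psi> \<Gamma>) Bot"
    unfolding Wstar_def by blast
  with assms(3) have "derives \<Gamma> Bot"
    by (rule derives_Bot_cut)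
  with assms(1) show False
    unfolding Wstar_def by blast
qed

lemma Wstar_mem_if_deriv_Imp:
  assumes "\<Gamma> \<in> Wstar \<Phi>" and "\<chi> \<in> \<Phi>" and "\<psi> \<in> \<Gamma>" and "deriv (Imp \<psi> \<chi>)"
  shows "\<chi> \<in> \<Gamma>"
  using assms Wstar_derives_mem derives_if_mem_deriv_Imp by blast

lemma deriv_Circ_imp:
  "deriv (Imp (Circ i \<phi>) \<phi>)"
  "deriv (Imp (Circ i \<phi>) (Apx i (Ii i (Circ i \<phi>))))"
  by (rule deriv_taut_mp[OF _ deriv.Mix_Circ[of i \<phi>]], simp add: taut_def)+

lemma mem_subfms_self [simp]: "\<phi> \<in> subfms \<phi>"
  by (cases \<phi>) auto

lemma comp_rel_preserves_Circ:
  assumes "Apx i (Ii i (Circ i \<phi>)) \<in> \<Phi>" and "Circ i \<phi> \<in> \<Gamma>"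
    and "(\<Gamma>, \<Delta>) \<in> comp_rel \<Phi> i"
  shows "Circ i \<phi> \<in> \<Delta>"
proof -
  obtain \<Theta> where apx: "(\<Gamma>, \<Theta>) \<in> apx_rel \<Phi> i" and sim: "(\<Theta>, \<Delta>) \<in> sim_rel \<Phi> i"
    using assms(3) unfolding comp_rel_def by blast
  have "\<Gamma> \<in> Wstar \<Phi>"
    using apx unfolding apx_rel_def by blast
  then have "Apx i (Ii i (Circ i \<phi>)) \<in> \<Gamma>"
    using assms(1,2) deriv_Circ_imp(2) by (rule Wstar_mem_if_deriv_Imp)
  then have "Ii i (Circ i \<phi>) \<in> \<Theta>"
    using apx unfolding apx_rel_def by blast
  then show ?thesis
    using sim unfolding sim_rel_def by blast
qed

lemma circ_path_preserves_Circ: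
  assumes "Apx i (Ii i (Circ i \<phi>)) \<in> \<Phi>" and "Circ i \<phi> \<in> \<Gamma>"
    and "circ_path \<Phi> i \<Gamma> xs"
  shows "fm_path \<Phi> (Circ i \<phi>) xs"
proof -
  have "Circ i \<phi> \<in> xs ! k" if "k < length xs" for k
    using that
  proof (induction k)
    case 0
    with assms(2,3) show ?case
      unfolding circ_path_def by (cases xs) auto
  next
    case (Suc k)
    with assms(3) have "(xs ! k, xs ! Suc k) \<in> comp_rel \<Phi> i"
      unfolding circ_path_def by blast
    with Suc show ?case
      using comp_rel_preserves_Circ[OF assms(1)] by simp
  qed
  with assms(3) show ?thesis
    unfolding circ_path_def fm_path_def by (auto simp: in_set_conv_nth)
qed

lemma fm_path_Circ_imp_fm_path:
  assumes "\<phi> \<in> \<Phi>" and "fm_path \<Phi> (Circ i \<phi>) xs"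
  shows "fm_path \<Phi> \<phi> xs"
  using assms Wstar_mem_if_deriv_Imp[OF _ assms(1) _ deriv_Circ_imp(1)]
  unfolding fm_path_def by (meson subsetD)

lemma circ_path_singleton: "\<Gamma> \<in> Wstar \<Phi> \<Longrightarrow> circ_path \<Phi> i \<Gamma> [\<Gamma>]"
  unfolding circ_path_def by simp

theorem lemma11:
  fixes \<phi>0 \<phi> :: "('i::finite) fm" and i :: 'i and \<Gamma> :: "'i fm set"
  assumes "Circ i \<phi> \<in> cl \<phi>0"
    and "\<Gamma> \<in> Wstar (cl \<phi>0)"
  shows "Circ i \<phi> \<in> \<Gamma> \<longleftrightarrow>
         (\<forall>xs. circ_path (cl \<phi>0) i \<Gamma> xs \<longrightarrow>
                fm_path (cl \<phi>0) \<phi> xs \<and> fm_path (cl \<phi>0) (Circ i \<phi>) xs)"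
proof
  assume "Circ i \<phi> \<in> \<Gamma>"
  moreover have "Apx i (Ii i (Circ i \<phi>)) \<in> cl \<phi>0"
    using assms(1) by (rule cl.circ)
  moreover have "\<phi> \<in> cl \<phi>0"
    using assms(1) by (rule cl.sub) simp
  ultimately show "\<forall>xs. circ_path (cl \<phi>0) i \<Gamma> xs \<longrightarrow>
                     fm_path (cl \<phi>0) \<phi> xs \<and> fm_path (cl \<phi>0) (Circ i \<phi>) xs"
    using circ_path_preserves_Circ fm_path_Circ_imp_fm_path by metis
next
  assume "\<forall>xs. circ_path (cl \<phi>0) i \<Gamma> xs \<longrightarrow>
                fm_path (cl \<phi>0) \<phi> xs \<and> fm_path (cl \<phi>0) (Circ i \<phi>) xs"
  then have "fm_path (cl \<phi>0) (Circ i \<phi>) [\<Gamma>]"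
    using circ_path_singleton[OF assms(2)] by blast
  then show "Circ i \<phi> \<in> \<Gamma>"
    unfolding fm_path_def by simp
qed

end
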